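(* Let $F:\mathbb{R}_{\ge0}\to\mathbb{R}_{>0}$ be differentiable with $f=F'$ satisfying $f(x)<0$ for all $x$, and $\lim_{x\to\infty}F(x)=0$. Assume that for every $a\in(0,1)$ the limits $\lim_{x\to\infty}\frac{F(x)}{F(ax)}$ and $\lim_{x\to\infty}\frac{f(x)}{f(ax)}$ exist (in the extended reals). Let $g(x)=-\ln F(x)$. If $g'(x)\in\omega(1/x)$, i.e. $\lim_{x\to\infty}x\,g'(x)=\infty$, then $\lim_{x\to\infty}\frac{f(x)}{f(ax)}=0$ for every $a\in(0,1)$. *)

theory Defs
  imports "HOL-Analysis.Analysis"
begin

end

theory Submission
  imports Defs
begin

text \<open>Suppose the ratio \<open>f x / f (a x)\<close> tended to a limit \<open>L > 0\<close>, and take \<open>0 < c < L\<close>.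
  Then \<open>F x - (c/a) F (a x)\<close> is eventually decreasing and tends to \<open>0\<close>, so
  \<open>F x \<ge> (c/a) F (a x)\<close> for large \<open>x\<close>.  On the other hand \<open>x g'(x) \<ge> M\<close> for large \<open>x\<close>
  makes \<open>F x x\<^sup>M\<close> eventually decreasing, so \<open>F x \<le> a\<^sup>M F (a x)\<close>; taking \<open>a\<^sup>M < c/a\<close>
  gives a contradiction.  The ratio is nonnegative, hence its limit is \<open>0\<close>.\<close>

lemma antimono_tendsto_imp_ge:
  fixes h :: "'a::{linorder,no_top} \<Rightarrow> 'b::linorder_topology"
  assumes antimono: "\<And>x y. x0 \<le> x \<Longrightarrow> x \<le> y \<Longrightarrow> h y \<le> h x"
    and lim: "(h \<longlongrightarrow> l) at_top"
    and "x0 \<le> x"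
  shows "l \<le> h x"
proof (rule tendsto_upperbound[OF lim])
  show "\<forall>\<^sub>F y in at_top. h y \<le> h x"
    using eventually_ge_at_top[of x] by eventually_elim (use antimono \<open>x0 \<le> x\<close> in blast)
qed simp

lemma scaled_lower_bound:
  fixes F f :: "real \<Rightarrow> real"
  assumes deriv: "\<And>x. x > 0 \<Longrightarrow> (F has_real_derivative f x) (at x)"
    and lim: "(F \<longlongrightarrow> 0) at_top"
    and "a > 0" "x0 > 0"
    and ratio: "\<And>x. x \<ge> x0 \<Longrightarrow> f x \<le> c * f (a * x)"
    and "x \<ge> x0"
  shows "c / a * F (a * x) \<le> F x"
proof -
  define h where "h t = F t - c / a * F (a * t)" for t
  have h_deriv: "(h has_real_derivative f t - c * f (a * t)) (at t)" if "t > 0" for t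
  proof -
    have "((\<lambda>t. F (a * t)) has_real_derivative f (a * t) * a) (at t)"
      using DERIV_chain2[OF deriv DERIV_cmult_Id] \<open>a > 0\<close> that by simp
    then show ?thesis
      unfolding h_def using \<open>a > 0\<close>
      by (auto intro!: derivative_eq_intros deriv that)
  qed
  have "h y \<le> h x" if "x0 \<le> x" "x \<le> y" for x y
  proof (rule DERIV_nonpos_imp_nonincreasing[OF \<open>x \<le> y\<close>])
    fix t assume "x \<le> t" "t \<le> y"
    with \<open>x0 \<le> x\<close> \<open>x0 > 0\<close> have "t > 0" "f t - c * f (a * t) \<le> 0"
      using ratio[of t] by auto
    then show "\<exists>d. (h has_real_derivative d) (at t) \<and> d \<le> 0"
      using h_deriv by blast
  qed
  moreover have "filterlim (\<lambda>t. a * t) at_top at_top"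
    using \<open>a > 0\<close> by (intro filterlim_tendsto_pos_mult_at_top[OF tendsto_const] filterlim_ident)
  then have "(h \<longlongrightarrow> 0 - c / a * 0) at_top"
    unfolding h_def by (intro tendsto_intros lim filterlim_compose[OF lim])
  ultimately have "0 \<le> h x"
    using antimono_tendsto_imp_ge[of x0 h 0 x] \<open>x \<ge> x0\<close> by simp
  then show ?thesis
    unfolding h_def by simp
qed

lemma power_decay_bound:
  fixes F f :: "real \<Rightarrow> real"
  assumes deriv: "\<And>x. x > 0 \<Longrightarrow> (F has_real_derivative f x) (at x)"
    and pos: "\<And>x. x > 0 \<Longrightarrow> F x > 0"
    and "x1 > 0"
    and elasticity: "\<And>x. x \<ge> x1 \<Longrightarrow> M * F x \<le> - x * f x"
    and "x1 \<le> y" "y \<le> x"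
  shows "F x \<le> (y / x) powr M * F y"
proof -
  define k where "k t = ln (F t) + M * ln t" for t
  have k_deriv: "(k has_real_derivative f t / F t + M / t) (at t)" if "t > 0" for t
    unfolding k_def using that pos[OF that]
    by (auto intro!: derivative_eq_intros deriv)
  have k_deriv_nonpos: "f t / F t + M / t \<le> 0" if "t \<ge> x1" for t
  proof -
    have "t > 0" "F t > 0"
      using that \<open>x1 > 0\<close> pos by auto
    with elasticity[OF that] show ?thesis
      by (simp add: field_simps)
  qed
  have "k x \<le> k y"
  proof (rule DERIV_nonpos_imp_nonincreasing[OF \<open>y \<le> x\<close>])
    fix t assume "y \<le> t" "t \<le> x"
    with \<open>x1 > 0\<close> \<open>x1 \<le> y\<close> have "t \<ge> x1" "t > 0" by auto
    then show "\<exists>d. (k has_real_derivative d) (at t) \<and> d \<le> 0"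
      using k_deriv k_deriv_nonpos by blast
  qed
  then have "ln (F x) \<le> M * (ln y - ln x) + ln (F y)"
    unfolding k_def by (simp add: algebra_simps)
  also have "\<dots> = ln ((y / x) powr M * F y)"
    using \<open>x1 > 0\<close> \<open>x1 \<le> y\<close> \<open>y \<le> x\<close> pos[of y]
    by (simp add: ln_mult ln_div ln_powr)
  finally show ?thesis
    using \<open>x1 > 0\<close> \<open>x1 \<le> y\<close> \<open>y \<le> x\<close> pos[of x] pos[of y] by simp
qed

lemma ratio_not_eventually_bounded_away:
  fixes F f :: "real \<Rightarrow> real"
  assumes deriv: "\<And>x. x > 0 \<Longrightarrow> (F has_real_derivative f x) (at x)"
    and pos: "\<And>x. x > 0 \<Longrightarrow> F x > 0"
    and lim: "(F \<longlongrightarrow> 0) at_top"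
    and elasticity: "\<And>M. \<forall>\<^sub>F x in at_top. M * F x \<le> - x * f x"
    and a: "a \<in> {0<..<1}" and "c > 0"
  shows "\<not> (\<forall>\<^sub>F x in at_top. f x \<le> c * f (a * x))"
proof
  assume "\<forall>\<^sub>F x in at_top. f x \<le> c * f (a * x)"
  then obtain x0 where x0: "\<And>x. x \<ge> x0 \<Longrightarrow> f x \<le> c * f (a * x)"
    unfolding eventually_at_top_linorder by blast
  have "a > 0" "ln a < 0"
    using a by auto
  define M where "M = ln (c / a) / ln a + 1"
  have "M * ln a = ln (c / a) + ln a"
    using \<open>ln a < 0\<close> unfolding M_def by (simp add: field_simps)
  then have "M * ln a < ln (c / a)"
    using \<open>ln a < 0\<close> by simp
  then have aM: "a powr M < c / a"
    using \<open>a > 0\<close> \<open>c > 0\<close> by (metis exp_less_mono exp_ln powr_def divide_pos_pos)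
  obtain x1 where x1: "\<And>x. x \<ge> x1 \<Longrightarrow> M * F x \<le> - x * f x"
    using elasticity[of M] unfolding eventually_at_top_linorder by blast
  define y0 where "y0 = max x0 1"
  define y1 where "y1 = max x1 1"
  define x where "x = max y0 (y1 / a)"
  have "y0 > 0" "y1 > 0" "x \<ge> y0" "y1 / a \<le> x"
    unfolding y0_def y1_def x_def by auto
  then have "a * x \<ge> y1" "x > 0"
    using \<open>a > 0\<close> by (auto simp: pos_divide_le_eq mult.commute)
  have "a * x \<le> x"
    using a \<open>x > 0\<close> by simp
  have "c / a * F (a * x) \<le> F x"
    using scaled_lower_bound[OF deriv lim \<open>a > 0\<close> \<open>y0 > 0\<close>] x0 \<open>x \<ge> y0\<close>
    unfolding y0_def by auto
  also have "\<dots> \<le> (a * x / x) powr M * F (a * x)"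
    using power_decay_bound[OF deriv pos \<open>y1 > 0\<close> _ \<open>a * x \<ge> y1\<close> \<open>a * x \<le> x\<close>] x1
    unfolding y1_def by auto
  also have "\<dots> < c / a * F (a * x)"
    using mult_strict_right_mono[OF aM pos[of "a * x"]] \<open>x > 0\<close> \<open>a > 0\<close> by simp
  finally show False by simp
qed

lemma eventually_elasticity_ge:
  fixes F f :: "real \<Rightarrow> real"
  assumes deriv: "\<And>x. x > 0 \<Longrightarrow> (F has_real_derivative f x) (at x)"
    and pos: "\<And>x. x > 0 \<Longrightarrow> F x > 0"
    and log_deriv: "filterlim (\<lambda>x. x * deriv (\<lambda>t. - ln (F t)) x) at_top at_top"
  shows "\<forall>\<^sub>F x in at_top. M * F x \<le> - x * f x"
  using filterlim_at_top[THEN iffD1, OF log_deriv, rule_format, of M] eventually_gt_at_top[of 0]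
proof eventually_elim
  case (elim x)
  moreover have "deriv (\<lambda>t. - ln (F t)) x = - (f x / F x)"
    using elim pos[of x] by (auto intro!: DERIV_imp_deriv derivative_eq_intros deriv)
  ultimately show ?case
    using pos[of x] by (simp add: field_simps)
qed

lemma tendsto_zero_if_nonneg_not_eventually_gt:
  fixes r :: "'a \<Rightarrow> real"
  assumes lim: "((\<lambda>x. ereal (r x)) \<longlongrightarrow> L) F" and "F \<noteq> bot"
    and nonneg: "\<forall>\<^sub>F x in F. 0 \<le> r x"
    and not_gt: "\<And>c. c > 0 \<Longrightarrow> \<not> (\<forall>\<^sub>F x in F. c < r x)"
  shows "(r \<longlongrightarrow> 0) F"
proof -
  have "0 \<le> L"
    using nonneg by (intro tendsto_lowerbound[OF lim _ \<open>F \<noteq> bot\<close>]) (auto elim: eventually_mono)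
  moreover have "\<not> 0 < L"
  proof
    assume "0 < L"
    then obtain c where "0 < ereal c" "ereal c < L"
      using ereal_dense2 by blast
    then show False
      using not_gt[of c] order_tendstoD(1)[OF lim \<open>ereal c < L\<close>] by simp
  qed
  ultimately have "L = 0" by simp
  with lim show ?thesis
    by (simp add: zero_ereal_def lim_ereal)
qed

theorem lemma2:
  fixes F f :: "real \<Rightarrow> real"
  assumes F_pos: "\<And>x. x \<ge> 0 \<Longrightarrow> F x > 0"
    and F_deriv: "\<And>x. x \<ge> 0 \<Longrightarrow> (F has_real_derivative f x) (at x within {0..})"
    and f_neg: "\<And>x. x \<ge> 0 \<Longrightarrow> f x < 0"
    and F_lim: "(F \<longlongrightarrow> 0) at_top"
    and lim_F: "\<And>a. a \<in> {0<..<1} \<Longrightarrow>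
                  \<exists>L::ereal. ((\<lambda>x. ereal (F x / F (a * x))) \<longlongrightarrow> L) at_top"
    and lim_f: "\<And>a. a \<in> {0<..<1} \<Longrightarrow>
                  \<exists>L::ereal. ((\<lambda>x. ereal (f x / f (a * x))) \<longlongrightarrow> L) at_top"
    and omega: "filterlim (\<lambda>x. x * deriv (\<lambda>t. - ln (F t)) x) at_top at_top"
  shows "\<forall>a \<in> {0<..<1}. ((\<lambda>x. f x / f (a * x)) \<longlongrightarrow> 0) at_top"
proof
  fix a :: real assume a: "a \<in> {0<..<1}"
  have deriv: "(F has_real_derivative f x) (at x)" if "x > 0" for x
    using F_deriv[of x] that at_within_interior[of x "{0..}"] by simp
  have pos: "F x > 0" if "x > 0" for x
    using F_pos that by simp
  obtain L where "((\<lambda>x. ereal (f x / f (a * x))) \<longlongrightarrow> L) at_top"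
    using lim_f[OF a] by blast
  then show "((\<lambda>x. f x / f (a * x)) \<longlongrightarrow> 0) at_top"
  proof (rule tendsto_zero_if_nonneg_not_eventually_gt)
    show "\<forall>\<^sub>F x in at_top. 0 \<le> f x / f (a * x)"
      using eventually_ge_at_top[of 0]
      by eventually_elim (use a f_neg in \<open>simp add: divide_nonpos_neg less_imp_le\<close>)
    show "\<not> (\<forall>\<^sub>F x in at_top. c < f x / f (a * x))" if "c > 0" for c
    proof
      assume "\<forall>\<^sub>F x in at_top. c < f x / f (a * x)"
      then have "\<forall>\<^sub>F x in at_top. f x \<le> c * f (a * x)"
        using eventually_ge_at_top[of 0]
        by eventually_elim (use a f_neg in \<open>simp add: neg_less_divide_eq\<close>)
      then show False
        using ratio_not_eventually_bounded_away[OF deriv pos F_lim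
            eventually_elasticity_ge[OF deriv pos omega] a \<open>c > 0\<close>] by simp
    qed
  qed simp
qed

end
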